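(* Let $A$ be a commutative Noetherian regular ring of prime characteristic $p$, let $e\geq 1$, and let $y_1,\ldots,y_n$ be an $A$-Koszul regular sequence, $I_n=\langle y_1,\ldots,y_n\rangle$. Then the Frobenius–Koszul complex $\mathcal{FK}_\bullet(y_1,\ldots,y_n;A)$ is a finite free resolution of $A/I_n$ in the category of left $A[\Theta;F^e]$-modules.
   Context: $F:A\to A$ is the Frobenius map $a\mapsto a^p$ and $F^e$ its $e$-th iterate. The left skew polynomial ring $A[\Theta;F^e]$ is the ring which is a free left $A$-module with basis $\{\Theta^i\}_{i\geq0}$ and multiplication determined by $\Theta a=a^{p^e}\Theta$. A sequence $y_1,\dots,y_n$ in $A$ is Koszul regular if the Koszul complex $K_\bullet(y_1,\ldots,y_n;A)$ has homology only in degree $0$. For $J=\{j_1<\cdots<j_k\}\subseteq\{1,\dots,n\}$ put $\mathbf{e}_J=\mathbf{e}_{j_1}\wedge\cdots\wedge\mathbf{e}_{j_k}$ and $y_J^{p^e-1}=y_{j_1}^{p^e-1}\cdots y_{j_k}^{p^e-1}$ (equal to $1$ if $J=\emptyset$). The Frobenius–Koszul complex $\mathcal{FK}_\bullet(y_1,\ldots,y_n;A)$ has, for $0\le l\le n+1$, $\mathcal{FK}_l$ the free left $A[\Theta;F^e]$-module with basis $\{\mathbf{e}_I:|I|=l\}\cup\{\mathbf{e}_J\wedge u:|J|=l-1\}$, and left $A[\Theta;F^e]$-linear differentials $\partial_l(\mathbf{e}_I)=\sum_{r=1}^l(-1)^{r-1}y_{i_r}\mathbf{e}_{I\setminus\{i_r\}}$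 for $I=\{i_1<\dots<i_l\}$ and $\partial_l(\mathbf{e}_J\wedge u)=(-1)^{l-1}(\Theta-y_J^{p^e-1})\mathbf{e}_J+\sum_{r=1}^{l-1}(-1)^{r-1}y_{j_r}^{p^e}\mathbf{e}_{J\setminus\{j_r\}}\wedge u$ for $J=\{j_1<\dots<j_{l-1}\}$. $A/I_n$ is a left $A[\Theta;F^e]$-module with $\Theta$ acting by $\bar a\mapsto \overline{a^{p^e}}$. *)

theory Defs
  imports Main "HOL-Library.Extended_Nat" "HOL-Computational_Algebra.Primes"
begin

definition is_ideal :: "'a::comm_ring_1 set \<Rightarrow> bool" where
  "is_ideal I \<longleftrightarrow> 0 \<in> I \<and> (\<forall>a\<in>I. \<forall>b\<in>I. a + b \<in> I) \<and> (\<forall>r. \<forall>a\<in>I. r * a \<in> I)"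

definition gen_ideal :: "'a::comm_ring_1 set \<Rightarrow> 'a set" where
  "gen_ideal X = {a. \<exists>F c. finite F \<and> F \<subseteq> X \<and> a = (\<Sum>x\<in>F. c x * x)}"

definition prime_ideal :: "'a::comm_ring_1 set \<Rightarrow> bool" where
  "prime_ideal P \<longleftrightarrow> is_ideal P \<and> 1 \<notin> P \<and> (\<forall>a b. a * b \<in> P \<longrightarrow> a \<in> P \<or> b \<in> P)"

definition noetherian_ring :: "'a::comm_ring_1 itself \<Rightarrow> bool" where
  "noetherian_ring _ \<longleftrightarrow> (\<forall>I::'a set. is_ideal I \<longrightarrow> (\<exists>F. finite F \<and> I = gen_ideal F))"

text \<open>Krull dimension of the localization A_P, via the correspondence between primes of
  A_P and primes of A contained in P: supremum of lengths k of chains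
  Q_0 < Q_1 < ... < Q_k of primes contained in P.\<close>
definition local_dim :: "'a::comm_ring_1 set \<Rightarrow> enat" where
  "local_dim P = Sup {enat k | k. \<exists>Q :: nat \<Rightarrow> 'a set.
      (\<forall>i\<le>k. prime_ideal (Q i) \<and> Q i \<subseteq> P) \<and> (\<forall>i<k. Q i \<subset> Q (Suc i))}"

text \<open>The maximal ideal P A_P of A_P is generated by k elements (written out for
  the localization: the generators may be taken as x_i/1 with x_i in P, and a/1 lies in
  the ideal they generate iff s*a lies in (x_1..x_k) for some s outside P).\<close>
definition local_gens :: "'a::comm_ring_1 set \<Rightarrow> nat \<Rightarrow> bool" where
  "local_gens P k \<longleftrightarrow> (\<exists>x :: nat \<Rightarrow> 'a. (\<forall>i<k. x i \<in> P) \<and>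
      (\<forall>a\<in>P. \<exists>s. s \<notin> P \<and> s * a \<in> gen_ideal (x ` {..<k})))"

text \<open>A_P is a regular local ring: dim A_P = minimal number of generators of P A_P.\<close>
definition regular_at :: "'a::comm_ring_1 set \<Rightarrow> bool" where
  "regular_at P \<longleftrightarrow> local_dim P = enat (LEAST k. local_gens P k)"

definition regular_ring :: "'a::comm_ring_1 itself \<Rightarrow> bool" where
  "regular_ring T \<longleftrightarrow> noetherian_ring T \<and> (\<forall>P::'a set. prime_ideal P \<longrightarrow> regular_at P)"

text \<open>Position sign: for i not in K, (-1)^(r-1) where i is the r-th element of insert i K.\<close>
definition pos :: "nat \<Rightarrow> nat set \<Rightarrow> nat" where
  "pos i K = card {j\<in>K. j < i}"

text \<open>K_l(y;A): free A-module on e_J, J subset of {1..n}, |J| = l; element = coefficient function.\<close>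
definition kz_chains :: "nat \<Rightarrow> nat \<Rightarrow> (nat set \<Rightarrow> 'a::comm_ring_1) set" where
  "kz_chains n l = {f. \<forall>J. f J \<noteq> 0 \<longrightarrow> J \<subseteq> {1..n} \<and> card J = l}"

definition kz_d :: "(nat \<Rightarrow> 'a::comm_ring_1) \<Rightarrow> nat \<Rightarrow> (nat set \<Rightarrow> 'a) \<Rightarrow> nat set \<Rightarrow> 'a" where
  "kz_d y n f J = (if J \<subseteq> {1..n}
      then (\<Sum>i\<in>{1..n} - J. (-1) ^ pos i J * y i * f (insert i J)) else 0)"

definition koszul_regular :: "(nat \<Rightarrow> 'a::comm_ring_1) \<Rightarrow> nat \<Rightarrow> bool" where
  "koszul_regular y n \<longleftrightarrow> (\<forall>l\<ge>1. \<forall>f\<in>kz_chains n l. kz_d y n f = (\<lambda>_. 0) \<longrightarrow>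
      (\<exists>g\<in>kz_chains n (Suc l). f = kz_d y n g))"

text \<open>Basis of FK_l: (I, False) stands for e_I with |I| = l, (J, True) for e_J \<and> u with |J| = l - 1.\<close>
definition fk_basis :: "nat \<Rightarrow> nat \<Rightarrow> (nat set \<times> bool) set" where
  "fk_basis n l = {(I, False) | I. I \<subseteq> {1..n} \<and> card I = l}
                \<union> {(J, True) | J. l \<ge> 1 \<and> J \<subseteq> {1..n} \<and> card J = l - 1}"

text \<open>An element of the free left A[Theta;F^e]-module FK_l is a finite sum of terms
  c(b,m) Theta^m b with b a basis element; c is its finitely supported coefficient function.\<close>
definition fk_chains :: "nat \<Rightarrow> nat \<Rightarrow> ((nat set \<times> bool) \<times> nat \<Rightarrow> 'a::comm_ring_1) set" where
  "fk_chains n l = {c. finite {x. c x \<noteq> 0} \<and> (\<forall>b m. b \<notin> fk_basis n l \<longrightarrow> c (b, m) = 0)}"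

text \<open>The left-linear differential d_l : FK_l -> FK_(l-1), with q = p^e, computed using
  Theta^m a = a^(q^m) Theta^m.  Coefficient of Theta^m b' in d_l(c).\<close>
definition fk_d :: "(nat \<Rightarrow> 'a::comm_ring_1) \<Rightarrow> nat \<Rightarrow> nat \<Rightarrow> nat
     \<Rightarrow> ((nat set \<times> bool) \<times> nat \<Rightarrow> 'a) \<Rightarrow> (nat set \<times> bool) \<times> nat \<Rightarrow> 'a" where
  "fk_d y n q l c x = (case x of ((K, flag), m) \<Rightarrow>
     if (K, flag) \<notin> fk_basis n (l - 1) then 0
     else if \<not> flag then
         (\<Sum>i\<in>{1..n} - K. (-1) ^ pos i K * y i ^ (q ^ m) * c ((insert i K, False), m))
       + (-1) ^ (l - 1) * (if m \<ge> 1 then c ((K, True), m - 1) else 0)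
       - (-1) ^ (l - 1) * (\<Prod>j\<in>K. y j ^ (q - 1)) ^ (q ^ m) * c ((K, True), m)
     else
         (\<Sum>j\<in>{1..n} - K. (-1) ^ pos j K * (y j ^ q) ^ (q ^ m) * c ((insert j K, True), m)))"

text \<open>Augmentation FK_0 = A[Theta;F^e] -> A/I_n, sum a_m Theta^m |-> class of sum a_m
  (Theta acts on A/I_n by Frobenius, so Theta^m . 1 = 1).  Representative in A.\<close>
definition fk_aug :: "((nat set \<times> bool) \<times> nat \<Rightarrow> 'a::comm_ring_1) \<Rightarrow> 'a" where
  "fk_aug c = (\<Sum>x\<in>{x. c x \<noteq> 0}. c x)"

end

theory Submission
  imports Defs
begin

text \<open>Sort the coefficients of a chain of \<open>FK\<^sub>l\<close> by the power \<open>\<Theta>\<^sup>m\<close> and by whether the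
  basis element contains \<open>u\<close>. Moving \<open>\<Theta>\<^sup>m\<close> past scalars raises them to the power \<open>q\<^sup>m\<close>, so
  on the \<open>e\<^sub>I\<close>-coefficients the differential is the Koszul differential of the sequence
  \<open>y\<^sup>q\<^sup>^\<^sup>m\<close>, on the \<open>e\<^sub>J \<and> u\<close>-coefficients that of \<open>y\<^sup>q\<^sup>^\<^sup>(\<^sup>m\<^sup>+\<^sup>1\<^sup>)\<close>, and the two are
  linked by \<open>b \<mapsto> \<plusminus>(\<Theta> b - y\<^sub>J\<^sup>(\<^sup>q\<^sup>-\<^sup>1\<^sup>)\<^sup>q\<^sup>^\<^sup>m b)\<close>. Koszul regularity passes to products of
  entries (the Koszul complex is a mapping cone at each entry), hence to all powers \<open>y\<^sup>N\<close>.
  A cycle is then a boundary: lift its \<open>u\<close>-part first, then what remains of its plain part,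
  one \<open>\<Theta>\<close>-degree at a time. Where Koszul regularity gives nothing (the \<open>u\<close>-part in degree 1,
  and the augmentation in degree 0), the cycle condition exhibits the coefficients as telescoping
  sums, which are lifted by hand. In top degree a kernel element satisfies
  \<open>b\<^sub>m\<^sub>-\<^sub>1 = y\<^sub>1\<^sub>.\<^sub>.\<^sub>n\<^sup>(\<^sup>q\<^sup>-\<^sup>1\<^sup>)\<^sup>q\<^sup>^\<^sup>m b\<^sub>m\<close>, so it vanishes because it has finite support.\<close>

lemma pos_insert:
  assumes "finite K" "i \<notin> K"
  shows "pos j (insert i K) = pos j K + (if i < j then 1 else 0)"
proof -
  have "{x\<in>insert i K. x < j} = (if i < j then insert i {x\<in>K. x < j} else {x\<in>K. x < j})"
    by auto
  then show ?thesis
    using assms unfolding pos_def by auto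
qed

lemma neg_one_power_square: "(-1::'a::ring_1) ^ k * (-1) ^ k = 1"
  by (simp add: power_add[symmetric])

lemma mem_kz_chains_iff:
  "f \<in> kz_chains n l \<longleftrightarrow> (\<forall>K. \<not> (K \<subseteq> {1..n} \<and> card K = l) \<longrightarrow> f K = 0)"
  unfolding kz_chains_def by blast

lemma kz_chains_zero [simp]: "(\<lambda>_. 0) \<in> kz_chains n l"
  and kz_chains_add [intro]: "u \<in> kz_chains n l \<Longrightarrow> v \<in> kz_chains n l \<Longrightarrow> (\<lambda>K. u K + v K) \<in> kz_chains n l"
  and kz_chains_diff [intro]: "u \<in> kz_chains n l \<Longrightarrow> v \<in> kz_chains n l \<Longrightarrow> (\<lambda>K. u K - v K) \<in> kz_chains n l"
  and kz_chains_mult [intro]: "u \<in> kz_chains n l \<Longrightarrow> (\<lambda>K. c K * u K) \<in> kz_chains n l"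
  by (auto simp: mem_kz_chains_iff)

lemma kz_d_add: "kz_d y n (\<lambda>K. u K + v K) = (\<lambda>K. kz_d y n u K + kz_d y n v K)"
  by (simp add: kz_d_def fun_eq_iff distrib_left sum.distrib)

lemma kz_d_diff: "kz_d y n (\<lambda>K. u K - v K) = (\<lambda>K. kz_d y n u K - kz_d y n v K)"
  by (simp add: kz_d_def fun_eq_iff right_diff_distrib sum_subtractf)

lemma kz_d_scale: "kz_d y n (\<lambda>K. c * u K) = (\<lambda>K. c * kz_d y n u K)"
  by (simp add: kz_d_def fun_eq_iff sum_distrib_left mult.left_commute)

lemma kz_d_zero [simp]: "kz_d y n (\<lambda>_. 0) = (\<lambda>_. 0)"
  by (simp add: kz_d_def fun_eq_iff)

lemma kz_d_cong: "(\<And>i. i \<in> {1..n} \<Longrightarrow> y i = y' i) \<Longrightarrow> kz_d y n = kz_d y' n"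
  unfolding kz_d_def by (intro ext if_cong[OF refl sum.cong[OF refl] refl]) auto

lemma kz_d_empty: "kz_d y n f {} = (\<Sum>i\<in>{1..n}. y i * f {i})"
  by (simp add: kz_d_def pos_def)

lemma kz_d_support:
  assumes "f \<in> kz_chains n l" "kz_d y n f K \<noteq> 0"
  shows "K \<subseteq> {1..n} \<and> Suc (card K) = l"
proof -
  have K: "K \<subseteq> {1..n}" and "(\<Sum>i\<in>{1..n} - K. (-1) ^ pos i K * y i * f (insert i K)) \<noteq> 0"
    using assms(2) unfolding kz_d_def by (auto split: if_splits)
  then obtain i where i: "i \<in> {1..n} - K" "f (insert i K) \<noteq> 0"
    by (metis (no_types, lifting) mult_zero_right sum.neutral)
  then have "card (insert i K) = l"
    using assms(1) unfolding kz_chains_def by blast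
  moreover have "finite K"
    using K finite_subset by blast
  ultimately show ?thesis
    using K i by auto
qed

lemma kz_d_mem_kz_chains:
  assumes "f \<in> kz_chains n (Suc l)"
  shows "kz_d y n f \<in> kz_chains n l"
  unfolding kz_chains_def using kz_d_support[OF assms] by fastforce

lemma kz_chains_0_nonempty:
  assumes "f \<in> kz_chains n 0" "K \<noteq> {}"
  shows "f K = 0"
  using assms finite_subset[of K "{1..n}"] unfolding kz_chains_def by auto

lemma kz_d_kz_chains_1_nonempty:
  assumes "f \<in> kz_chains n 1" "K \<noteq> {}"
  shows "kz_d y n f K = 0"
  using kz_d_mem_kz_chains[of f n 0 y] assms kz_chains_0_nonempty by simp

lemma neg_one_power_swap:
  assumes "finite K" "i \<notin> K" "j \<notin> K" "i \<noteq> j"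
  shows "(-1::'a::comm_ring_1) ^ (pos i K + pos j (insert i K))
       = - ((-1) ^ (pos j K + pos i (insert j K)))"
  using assms(4) unfolding pos_insert[OF assms(1,2)] pos_insert[OF assms(1,3)]
  by (cases "i < j") (auto simp: power_add)

lemma sum_off_diagonal_antisym:
  fixes T :: "'b::linorder \<Rightarrow> 'b \<Rightarrow> 'a::ab_group_add"
  assumes fin: "finite S" and anti: "\<And>i j. i \<in> S \<Longrightarrow> j \<in> S \<Longrightarrow> i \<noteq> j \<Longrightarrow> T i j = - T j i"
  shows "(\<Sum>i\<in>S. \<Sum>j\<in>S - {i}. T i j) = 0"
proof -
  let ?lt = "{(i,j). i \<in> S \<and> j \<in> S \<and> i < j}"
  let ?gt = "{(i,j). i \<in> S \<and> j \<in> S \<and> j < i}"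
  have fin_lt: "finite ?lt" and fin_gt: "finite ?gt"
    by (rule finite_subset[of _ "S \<times> S"]; use fin in auto)+
  have gt_swap: "?gt = prod.swap ` ?lt"
    by auto
  have "(\<Sum>i\<in>S. \<Sum>j\<in>S - {i}. T i j) = (\<Sum>(i,j)\<in>Sigma S (\<lambda>i. S - {i}). T i j)"
    by (rule sum.Sigma) (use fin in auto)
  also have "Sigma S (\<lambda>i. S - {i}) = ?lt \<union> ?gt"
    by auto
  also have "(\<Sum>(i,j)\<in>?lt \<union> ?gt. T i j) = (\<Sum>(i,j)\<in>?lt. T i j) + (\<Sum>(i,j)\<in>?gt. T i j)"
    by (rule sum.union_disjoint[OF fin_lt fin_gt]) auto
  also have "(\<Sum>(i,j)\<in>?gt. T i j) = (\<Sum>(i,j)\<in>?lt. T j i)"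
    unfolding gt_swap by (subst sum.reindex) (auto simp: case_prod_beta)
  also have "\<dots> = - (\<Sum>(i,j)\<in>?lt. T i j)"
    by (subst sum_negf[symmetric], rule sum.cong) (auto intro: anti)
  finally show ?thesis
    by simp
qed

lemma kz_d_kz_d: "kz_d y n (kz_d y n f) = (\<lambda>_. 0)"
proof
  fix K
  show "kz_d y n (kz_d y n f) K = 0"
  proof (cases "K \<subseteq> {1..n}")
    case False
    then show ?thesis
      unfolding kz_d_def by simp
  next
    case True
    let ?S = "{1..n} - K"
    let ?T = "\<lambda>i j. (-1) ^ (pos i K + pos j (insert i K)) * (y i * y j) * f (insert j (insert i K))"
    have "kz_d y n (kz_d y n f) K = (\<Sum>i\<in>?S. (-1) ^ pos i K * y i * kz_d y n f (insert i K))"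
      using True unfolding kz_d_def[of y n "kz_d y n f"] by simp
    also have "\<dots> = (\<Sum>i\<in>?S. \<Sum>j\<in>?S - {i}. ?T i j)"
    proof (rule sum.cong[OF refl])
      fix i assume i: "i \<in> ?S"
      then have "insert i K \<subseteq> {1..n}" "{1..n} - insert i K = ?S - {i}"
        using True by auto
      then show "(-1) ^ pos i K * y i * kz_d y n f (insert i K) = (\<Sum>j\<in>?S - {i}. ?T i j)"
        unfolding kz_d_def by (simp add: sum_distrib_left power_add ac_simps)
    qed
    also have "\<dots> = 0"
    proof (rule sum_off_diagonal_antisym)
      fix i j assume ij: "i \<in> ?S" "j \<in> ?S" "i \<noteq> j"
      have swap: "insert j (insert i K) = insert i (insert j K)"
        by auto
      have "finite K"
        using True finite_subset by blast
      then have sign: "(-1::'a) ^ (pos i K + pos j (insert i K)) = - ((-1) ^ (pos j K + pos i (insert j K)))"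
        using neg_one_power_swap[of K i j] ij by blast
      show "?T i j = - ?T j i"
        unfolding swap sign by (simp only: mult.commute[of "y i" "y j"] minus_mult_left)
    qed simp
    finally show ?thesis .
  qed
qed

section \<open>Koszul regularity of powers\<close>

definition avoids :: "nat \<Rightarrow> (nat set \<Rightarrow> 'a::zero) \<Rightarrow> bool" where
  "avoids r x \<longleftrightarrow> (\<forall>K. r \<in> K \<longrightarrow> x K = 0)"

text \<open>\<open>kz_cone r x z\<close> is the chain \<open>x + e\<^sub>r \<and> z\<close>, for \<open>x\<close> and \<open>z\<close> not involving \<open>e\<^sub>r\<close>.
  Replacing \<open>y\<^sub>r\<close> by \<open>h\<close> turns the Koszul complex into the mapping cone of multiplication by
  \<open>h\<close> on the Koszul complex of the remaining entries.\<close>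
definition kz_cone :: "nat \<Rightarrow> (nat set \<Rightarrow> 'a::comm_ring_1) \<Rightarrow> (nat set \<Rightarrow> 'a) \<Rightarrow> nat set \<Rightarrow> 'a" where
  "kz_cone r x z K = (if r \<in> K then (-1) ^ pos r (K - {r}) * z (K - {r}) else x K)"

lemma avoids_zero [simp]: "avoids r (\<lambda>_. 0)"
  and avoids_add: "avoids r u \<Longrightarrow> avoids r v \<Longrightarrow> avoids r (\<lambda>K. u K + v K)"
  and avoids_mult: "avoids r u \<Longrightarrow> avoids r (\<lambda>K. c * u K)"
  and avoids_uminus: "avoids r u \<Longrightarrow> avoids r (\<lambda>K. - u K)"
  and avoids_kz_d: "avoids r u \<Longrightarrow> avoids r (kz_d y n u)"
  by (auto simp: avoids_def kz_d_def)

lemma kz_cone_zero [simp]: "kz_cone r (\<lambda>_. 0) (\<lambda>_. 0) = (\<lambda>_. 0)"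
  by (auto simp: kz_cone_def)

lemma kz_cone_decompose:
  assumes a: "a \<in> kz_chains n l" and r: "r \<in> {1..n}"
  obtains x z where "avoids r x" "avoids r z" "x \<in> kz_chains n l" "z \<in> kz_chains n (l - 1)"
    "a = kz_cone r x z"
proof
  define x where "x K = (if r \<in> K then 0 else a K)" for K
  define z where "z K = (if r \<in> K then 0 else (-1) ^ pos r K * a (insert r K))" for K
  show "avoids r x" "avoids r z"
    by (auto simp: avoids_def x_def z_def)
  show "x \<in> kz_chains n l"
    using a by (auto simp: mem_kz_chains_iff x_def)
  show "z \<in> kz_chains n (l - 1)"
    unfolding kz_chains_def mem_Collect_eq
  proof (intro allI impI)
    fix K assume "z K \<noteq> 0"
    then have "r \<notin> K" "a (insert r K) \<noteq> 0"
      by (auto simp: z_def split: if_splits)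
    moreover from this have "insert r K \<subseteq> {1..n}" "card (insert r K) = l"
      using a unfolding kz_chains_def by auto
    moreover from this have "finite K"
      by (meson finite_atLeastAtMost finite_insert finite_subset)
    ultimately show "K \<subseteq> {1..n} \<and> card K = l - 1"
      by auto
  qed
  show "a = kz_cone r x z"
  proof
    fix K
    show "a K = kz_cone r x z K"
    proof (cases "r \<in> K")
      case True
      then have "insert r (K - {r}) = K"
        by auto
      then show ?thesis
        using True by (simp add: kz_cone_def z_def mult.assoc[symmetric] neg_one_power_square)
    qed (simp add: kz_cone_def x_def)
  qed
qed

lemma kz_cone_inject:
  assumes "avoids r x" "avoids r z" "avoids r x'" "avoids r z'"
  shows "kz_cone r x z = kz_cone r x' z' \<longleftrightarrow> x = x' \<and> z = z'"
proof
  assume eq: "kz_cone r x z = kz_cone r x' z'"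
  show "x = x' \<and> z = z'"
  proof (intro conjI ext)
    fix K
    show "x K = x' K"
      using fun_cong[OF eq, of K] assms(1,3) by (auto simp: kz_cone_def avoids_def split: if_splits)
    show "z K = z' K"
    proof (cases "r \<in> K")
      case False
      then have "insert r K - {r} = K"
        by auto
      then have "(-1) ^ pos r K * z K = (-1) ^ pos r K * z' K"
        using fun_cong[OF eq, of "insert r K"] by (simp add: kz_cone_def)
      then have "((-1) ^ pos r K * (-1) ^ pos r K) * z K = ((-1) ^ pos r K * (-1) ^ pos r K) * z' K"
        by (simp only: mult.assoc)
      then show ?thesis
        by (simp only: neg_one_power_square mult_1)
    qed (use assms(2,4) in \<open>simp add: avoids_def\<close>)
  qed
qed simp

lemma kz_cone_eq_0_iff:
  assumes "avoids r x" "avoids r z"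
  shows "kz_cone r x z = (\<lambda>_. 0) \<longleftrightarrow> x = (\<lambda>_. 0) \<and> z = (\<lambda>_. 0)"
  using kz_cone_inject[OF assms avoids_zero avoids_zero] by simp

lemma kz_cone_mem_kz_chains:
  assumes "x \<in> kz_chains n l" "z \<in> kz_chains n (l - 1)" "l \<ge> 1" "r \<in> {1..n}"
  shows "kz_cone r x z \<in> kz_chains n l"
  unfolding kz_chains_def mem_Collect_eq
proof (intro allI impI)
  fix K assume nz: "kz_cone r x z K \<noteq> 0"
  show "K \<subseteq> {1..n} \<and> card K = l"
  proof (cases "r \<in> K")
    case True
    then have "z (K - {r}) \<noteq> 0"
      using nz unfolding kz_cone_def by auto
    then have sub: "K - {r} \<subseteq> {1..n}" and card: "card (K - {r}) = l - 1"
      using assms(2) unfolding kz_chains_def by auto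
    have "finite K"
      using finite_subset[OF sub finite_atLeastAtMost] by simp
    then have "card K = Suc (card (K - {r}))"
      using True by (rule card.remove)
    then show ?thesis
      using True sub card assms(3,4) by auto
  next
    case False
    then show ?thesis
      using nz assms(1) unfolding kz_cone_def kz_chains_def by auto
  qed
qed

lemma kz_d_kz_cone_avoiding:
  assumes "avoids r x" "avoids r z" "z \<in> kz_chains n l" "r \<in> {1..n}" "r \<notin> K"
  shows "kz_d (y(r := h)) n (kz_cone r x z) K = kz_d y n x K + h * z K"
proof (cases "K \<subseteq> {1..n}")
  case False
  then have "z K = 0"
    using assms(3) unfolding kz_chains_def by auto
  then show ?thesis
    using False unfolding kz_d_def by simp
next
  case True
  have fin: "finite ({1..n} - K)" and rK: "r \<in> {1..n} - K"
    using assms(4,5) by auto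
  let ?f = "\<lambda>i. (-1) ^ pos i K * (y(r := h)) i * kz_cone r x z (insert i K)"
  let ?g = "\<lambda>i. (-1) ^ pos i K * y i * x (insert i K)"
  have "?f r = h * z K"
  proof -
    have "insert r K - {r} = K"
      using assms(5) by auto
    then have "?f r = ((-1) ^ pos r K * (-1) ^ pos r K) * h * z K"
      unfolding kz_cone_def by (simp add: ac_simps)
    then show ?thesis
      by (simp add: neg_one_power_square)
  qed
  moreover have "sum ?f ({1..n} - K - {r}) = sum ?g ({1..n} - K - {r})"
    by (rule sum.cong) (use assms(5) in \<open>auto simp: kz_cone_def\<close>)
  moreover have "?g r = 0"
    using assms(1) unfolding avoids_def by simp
  ultimately show ?thesis
    using True sum.remove[OF fin rK, of ?f] sum.remove[OF fin rK, of ?g]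
    unfolding kz_d_def by (simp add: add.commute)
qed

lemma kz_d_kz_cone_containing:
  assumes "avoids r z" "r \<in> {1..n}" "r \<notin> K"
  shows "kz_d (y(r := h)) n (kz_cone r x z) (insert r K) = (-1) ^ pos r K * - kz_d y n z K"
proof (cases "K \<subseteq> {1..n}")
  case False
  then show ?thesis
    unfolding kz_d_def by auto
next
  case True
  have finK: "finite K"
    using True finite_subset by blast
  have fin: "finite ({1..n} - K)" and rK: "r \<in> {1..n} - K"
    using assms(2,3) by auto
  let ?K = "insert r K"
  let ?f = "\<lambda>i. (-1) ^ pos i ?K * (y(r := h)) i * kz_cone r x z (insert i ?K)"
  let ?g = "\<lambda>i. (-1) ^ pos i K * y i * z (insert i K)"
  have "sum ?f ({1..n} - ?K) = sum (\<lambda>i. - ((-1) ^ pos r K * ?g i)) ({1..n} - ?K)"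
  proof (rule sum.cong[OF refl])
    fix i assume i: "i \<in> {1..n} - ?K"
    then have "insert i ?K - {r} = insert i K" "r \<in> insert i ?K" "i \<noteq> r" "i \<notin> K"
      using assms(3) by auto
    moreover have "(-1::'a) ^ pos i ?K * (-1) ^ pos r (insert i K) = - ((-1) ^ pos r K * (-1) ^ pos i K)"
      unfolding pos_insert[OF finK assms(3)] pos_insert[OF finK \<open>i \<notin> K\<close>]
      using \<open>i \<noteq> r\<close> by (cases "r < i") (auto simp: power_add)
    ultimately show "?f i = - ((-1) ^ pos r K * ?g i)"
      unfolding kz_cone_def by (simp add: ac_simps)
  qed
  also have "\<dots> = - ((-1) ^ pos r K * sum ?g ({1..n} - K))"
  proof -
    have "?g r = 0"
      using assms(1) unfolding avoids_def by simp
    moreover have "{1..n} - ?K = {1..n} - K - {r}"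
      by auto
    ultimately have "sum ?g ({1..n} - ?K) = sum ?g ({1..n} - K)"
      using sum.remove[OF fin rK, of ?g] by simp
    then show ?thesis
      by (simp add: sum_negf sum_distrib_left[symmetric])
  qed
  finally show ?thesis
    using True assms(2) unfolding kz_d_def by simp
qed

lemma kz_d_kz_cone:
  assumes "avoids r x" "avoids r z" "z \<in> kz_chains n l" "r \<in> {1..n}"
  shows "kz_d (y(r := h)) n (kz_cone r x z)
       = kz_cone r (\<lambda>K. kz_d y n x K + h * z K) (\<lambda>K. - kz_d y n z K)"
proof
  fix K
  show "kz_d (y(r := h)) n (kz_cone r x z) K
      = kz_cone r (\<lambda>K. kz_d y n x K + h * z K) (\<lambda>K. - kz_d y n z K) K"
  proof (cases "r \<in> K")
    case True
    then have "K = insert r (K - {r})"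
      by auto
    then show ?thesis
      using True kz_d_kz_cone_containing[OF assms(2,4), of "K - {r}" y h x]
      by (simp add: kz_cone_def)
  next
    case False
    then show ?thesis
      using kz_d_kz_cone_avoiding[OF assms] by (simp add: kz_cone_def)
  qed
qed

lemma koszul_regular_cone_lift:
  assumes reg: "koszul_regular (y(r := h)) n" and r: "r \<in> {1..n}" and l: "l \<ge> 1"
    and x: "avoids r x" "x \<in> kz_chains n l" and z: "avoids r z" "z \<in> kz_chains n (l - 1)"
    and cycle: "\<And>K. kz_d y n x K + h * z K = 0" "kz_d y n z = (\<lambda>_. 0)"
  obtains u v where "avoids r u" "u \<in> kz_chains n (Suc l)" "avoids r v" "v \<in> kz_chains n l"
    "\<And>K. x K = kz_d y n u K + h * v K" "\<And>K. z K = - kz_d y n v K"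
proof -
  have "kz_d (y(r := h)) n (kz_cone r x z) = (\<lambda>_. 0)"
    unfolding kz_d_kz_cone[OF x(1) z r] using cycle by simp
  then obtain w where w: "w \<in> kz_chains n (Suc l)" and xz: "kz_cone r x z = kz_d (y(r := h)) n w"
    using reg l kz_cone_mem_kz_chains[OF x(2) z(2) l r] unfolding koszul_regular_def by blast
  obtain u v where uv: "avoids r u" "avoids r v" "u \<in> kz_chains n (Suc l)" "v \<in> kz_chains n l"
    and "w = kz_cone r u v"
    using kz_cone_decompose[OF w r] by auto
  then have "kz_cone r x z = kz_cone r (\<lambda>K. kz_d y n u K + h * v K) (\<lambda>K. - kz_d y n v K)"
    using xz kz_d_kz_cone[OF uv(1,2,4) r] by simp
  then have "x = (\<lambda>K. kz_d y n u K + h * v K)" "z = (\<lambda>K. - kz_d y n v K)"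
    by (simp_all add: kz_cone_inject x(1) z(1) uv avoids_add avoids_mult avoids_uminus avoids_kz_d)
  with that uv show thesis
    by simp
qed

lemma koszul_regular_mult:
  assumes r: "r \<in> {1..n}"
    and f: "koszul_regular (y(r := f)) n" and g: "koszul_regular (y(r := g)) n"
  shows "koszul_regular (y(r := f * g)) n"
  unfolding koszul_regular_def
proof (intro allI impI ballI)
  fix l :: nat and a
  assume l: "l \<ge> 1" and a: "a \<in> kz_chains n l" and cycle: "kz_d (y(r := f * g)) n a = (\<lambda>_. 0)"
  let ?L = "kz_d y n"
  obtain x z where x: "avoids r x" "x \<in> kz_chains n l" and z: "avoids r z" "z \<in> kz_chains n (l - 1)"
    and a_eq: "a = kz_cone r x z"
    using kz_cone_decompose[OF a r] by metis
  have "kz_cone r (\<lambda>K. ?L x K + f * g * z K) (\<lambda>K. - ?L z K) = (\<lambda>_. 0)"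
    using cycle kz_d_kz_cone[OF x(1) z r, where h = "f * g"] unfolding a_eq by simp
  then have "(\<lambda>K. ?L x K + f * g * z K) = (\<lambda>_. 0) \<and> (\<lambda>K. - ?L z K) = (\<lambda>_. 0)"
    by (simp add: kz_cone_eq_0_iff x(1) z(1) avoids_add avoids_mult avoids_uminus avoids_kz_d)
  then have xz: "\<And>K. ?L x K + f * (g * z K) = 0" and Lz: "?L z = (\<lambda>_. 0)"
    by (auto simp: fun_eq_iff mult.assoc)
  obtain u v where u: "avoids r u" "u \<in> kz_chains n (Suc l)" and v: "avoids r v" "v \<in> kz_chains n l"
    and x_eq: "\<And>K. x K = ?L u K + f * v K" and gz_eq: "\<And>K. g * z K = - ?L v K"
    by (rule koszul_regular_cone_lift[OF f r l x avoids_mult[OF z(1)] kz_chains_mult[OF z(2)] xz])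
      (auto simp: kz_d_scale Lz)
  obtain s t where s: "avoids r s" "s \<in> kz_chains n (Suc l)" and t: "avoids r t" "t \<in> kz_chains n l"
    and v_eq: "\<And>K. v K = ?L s K + g * t K" and z_eq: "\<And>K. z K = - ?L t K"
    by (rule koszul_regular_cone_lift[OF g r l v z _ Lz]) (auto simp: gz_eq)
  let ?w = "kz_cone r (\<lambda>K. u K + f * s K) t"
  have "?w \<in> kz_chains n (Suc l)"
    using u s t r by (intro kz_cone_mem_kz_chains kz_chains_add kz_chains_mult) auto
  moreover have "kz_d (y(r := f * g)) n ?w = a"
  proof -
    have "x = (\<lambda>K. ?L (\<lambda>K. u K + f * s K) K + f * g * t K)" "z = (\<lambda>K. - ?L t K)"
      by (auto simp: fun_eq_iff x_eq v_eq z_eq kz_d_add kz_d_scale algebra_simps)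
    then show ?thesis
      unfolding a_eq kz_d_kz_cone[OF avoids_add[OF u(1) avoids_mult[OF s(1)]] t r] by simp
  qed
  ultimately show "\<exists>w\<in>kz_chains n (Suc l). a = kz_d (y(r := f * g)) n w"
    by metis
qed

lemma koszul_regular_cong:
  "(\<And>i. i \<in> {1..n} \<Longrightarrow> y i = y' i) \<Longrightarrow> koszul_regular y n = koszul_regular y' n"
  unfolding koszul_regular_def using kz_d_cong[of n y y'] by simp

lemma koszul_regular_fun_upd_power:
  assumes r: "r \<in> {1..n}" and reg: "koszul_regular y n" and k: "k \<ge> 1"
  shows "koszul_regular (y(r := y r ^ k)) n"
  using k
proof (induction k rule: dec_induct)
  case base
  then show ?case
    using reg by simp
next
  case (step k)
  have "koszul_regular (y(r := y r ^ k * y r)) n"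
    by (rule koszul_regular_mult[OF r step.IH]) (use reg in simp)
  moreover have "y r ^ Suc k = y r ^ k * y r"
    by (simp add: mult.commute)
  ultimately show ?case
    by (simp only:)
qed

lemma koszul_regular_power:
  assumes reg: "koszul_regular y n" and N: "N \<ge> 1"
  shows "koszul_regular (\<lambda>i. y i ^ N) n"
proof -
  define y' where "y' j i = (if i < j then y i ^ N else y i)" for j i
  have "koszul_regular (y' j) n" for j
  proof (induction j)
    case 0
    then show ?case
      using reg by (simp add: y'_def)
  next
    case (Suc j)
    have upd: "y' (Suc j) = (y' j)(j := y' j j ^ N)"
      by (auto simp: y'_def fun_eq_iff)
    show ?case
    proof (cases "j \<in> {1..n}")
      case True
      show ?thesis
        unfolding upd by (rule koszul_regular_fun_upd_power[OF True Suc.IH N])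
    next
      case False
      have "koszul_regular (y' (Suc j)) n = koszul_regular (y' j) n"
        by (rule koszul_regular_cong) (use False in \<open>auto simp: y'_def\<close>)
      then show ?thesis
        using Suc.IH by simp
    qed
  qed
  moreover have "koszul_regular (y' (Suc n)) n = koszul_regular (\<lambda>i. y i ^ N) n"
    by (rule koszul_regular_cong) (auto simp: y'_def)
  ultimately show ?thesis
    by simp
qed

definition fk_plain :: "((nat set \<times> bool) \<times> nat \<Rightarrow> 'a) \<Rightarrow> nat \<Rightarrow> nat set \<Rightarrow> 'a" where
  "fk_plain c m = (\<lambda>K. c ((K, False), m))"

definition fk_wedge :: "((nat set \<times> bool) \<times> nat \<Rightarrow> 'a) \<Rightarrow> nat \<Rightarrow> nat set \<Rightarrow> 'a" where
  "fk_wedge c m = (\<lambda>K. c ((K, True), m))"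

definition fk_of :: "(nat \<Rightarrow> nat set \<Rightarrow> 'a) \<Rightarrow> (nat \<Rightarrow> nat set \<Rightarrow> 'a) \<Rightarrow> (nat set \<times> bool) \<times> nat \<Rightarrow> 'a" where
  "fk_of a b x = (case x of ((K, u), m) \<Rightarrow> if u then b m K else a m K)"

text \<open>The coefficient sequence of \<open>\<Theta> b\<close>\<close>
definition theta_shift :: "(nat \<Rightarrow> nat set \<Rightarrow> 'a::zero) \<Rightarrow> nat \<Rightarrow> nat set \<Rightarrow> 'a" where
  "theta_shift b m = (if m \<ge> 1 then b (m - 1) else (\<lambda>_. 0))"

text \<open>\<open>\<Theta>\<^sup>m y\<^sub>K\<^sup>q\<^sup>-\<^sup>1 = fk_weight y q m K \<Theta>\<^sup>m\<close>\<close>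
definition fk_weight :: "(nat \<Rightarrow> 'a::comm_ring_1) \<Rightarrow> nat \<Rightarrow> nat \<Rightarrow> nat set \<Rightarrow> 'a" where
  "fk_weight y q m K = (\<Prod>j\<in>K. y j ^ (q - 1)) ^ (q ^ m)"

lemma theta_shift_mem_kz_chains: "(\<And>m. b m \<in> kz_chains n l) \<Longrightarrow> theta_shift b m \<in> kz_chains n l"
  by (simp add: theta_shift_def)

lemma fk_basis_plain_iff [simp]: "(K, False) \<in> fk_basis n l \<longleftrightarrow> K \<subseteq> {1..n} \<and> card K = l"
  and fk_basis_wedge_iff [simp]: "(K, True) \<in> fk_basis n l \<longleftrightarrow> l \<ge> 1 \<and> K \<subseteq> {1..n} \<and> card K = l - 1"
  unfolding fk_basis_def by auto

lemma fk_plain_fk_of [simp]: "fk_plain (fk_of a b) = a"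
  and fk_wedge_fk_of [simp]: "fk_wedge (fk_of a b) = b"
  unfolding fk_plain_def fk_wedge_def fk_of_def by (simp_all add: fun_eq_iff)

lemma fk_plain_zero [simp]: "fk_plain (\<lambda>_. 0) m = (\<lambda>_. 0)"
  and fk_wedge_zero [simp]: "fk_wedge (\<lambda>_. 0) m = (\<lambda>_. 0)"
  by (simp_all add: fk_plain_def fk_wedge_def)

lemma fk_of_parts: "fk_of (fk_plain c) (fk_wedge c) = c"
  unfolding fk_of_def fk_plain_def fk_wedge_def by (auto simp: fun_eq_iff split: prod.splits)

lemma fk_chain_eqI:
  assumes "\<And>m. fk_plain c m = fk_plain c' m" "\<And>m. fk_wedge c m = fk_wedge c' m"
  shows "c = c'"
  by (metis assms fk_of_parts ext)

lemma fk_plain_mem_kz_chains: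
  assumes "c \<in> fk_chains n l"
  shows "fk_plain c m \<in> kz_chains n l"
  using assms unfolding fk_chains_def kz_chains_def fk_plain_def by force

lemma fk_wedge_mem_kz_chains:
  assumes "c \<in> fk_chains n l"
  shows "fk_wedge c m \<in> kz_chains n (l - 1)"
  using assms unfolding fk_chains_def kz_chains_def fk_wedge_def by force

lemma fk_wedge_fk_chains_0:
  assumes "c \<in> fk_chains n 0"
  shows "fk_wedge c m = (\<lambda>_. 0)"
  using assms unfolding fk_chains_def fk_wedge_def by force

lemma fk_chainsI:
  assumes "finite {x. c x \<noteq> 0}"
    and plain: "\<And>m. fk_plain c m \<in> kz_chains n l"
    and wedge: "\<And>m. fk_wedge c m \<in> kz_chains n (l - 1)"
    and wedge_0: "l = 0 \<Longrightarrow> \<forall>m. fk_wedge c m = (\<lambda>_. 0)"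
  shows "c \<in> fk_chains n l"
  unfolding fk_chains_def mem_Collect_eq
proof (intro conjI allI impI)
  fix b m assume b: "b \<notin> fk_basis n l"
  obtain K u where "b = (K, u)"
    by fastforce
  moreover have "c ((K, u), m) = 0" if "(K, u) \<notin> fk_basis n l"
  proof (cases u)
    case True
    have "l \<noteq> 0 \<Longrightarrow> fk_wedge c m K = 0"
      using that wedge[of m] True unfolding kz_chains_def by auto
    then show ?thesis
      using wedge_0 True unfolding fk_wedge_def by (cases "l = 0") (auto simp: fun_eq_iff)
  next
    case False
    then show ?thesis
      using that plain[of m] unfolding kz_chains_def fk_plain_def by auto
  qed
  ultimately show "c (b, m) = 0"
    using b by simp
qed (fact assms(1))

lemma fk_chains_theta_bounded:
  assumes "c \<in> fk_chains n l"
  obtains M where "\<And>m. m \<ge> M \<Longrightarrow> fk_plain c m = (\<lambda>_. 0) \<and> fk_wedge c m = (\<lambda>_. 0)"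
proof -
  have "finite (snd ` {x. c x \<noteq> 0})"
    using assms unfolding fk_chains_def by blast
  then obtain M where M: "snd ` {x. c x \<noteq> 0} \<subseteq> {..<M}"
    using finite_nat_bounded by blast
  have "c ((K, u), m) = 0" if "m \<ge> M" for K u m
    using M that by (metis (mono_tags) imageI lessThan_iff mem_Collect_eq not_le snd_conv subsetD)
  then show thesis
    by (intro that[of M]) (auto simp: fk_plain_def fk_wedge_def fun_eq_iff)
qed

lemma fk_of_mem_fk_chains:
  assumes "\<And>m. a m \<in> kz_chains n l" "\<And>m. b m \<in> kz_chains n (l - 1)"
    and "l = 0 \<Longrightarrow> \<forall>m. b m = (\<lambda>_. 0)"
    and M: "\<And>m. m \<ge> M \<Longrightarrow> a m = (\<lambda>_. 0) \<and> b m = (\<lambda>_. 0)"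
  shows "fk_of a b \<in> fk_chains n l"
proof -
  have "{x. fk_of a b x \<noteq> 0} \<subseteq> (Pow {1..n} \<times> UNIV) \<times> {..<M}"
  proof
    fix x assume "x \<in> {x. fk_of a b x \<noteq> 0}"
    moreover obtain K u m where x: "x = ((K, u), m)"
      by (metis prod.collapse)
    ultimately have nz: "(if u then b m K else a m K) \<noteq> 0"
      by (simp add: fk_of_def)
    have "m < M"
    proof (rule ccontr)
      assume "\<not> m < M"
      then show False
        using M[of m] nz by (auto split: if_splits)
    qed
    moreover have "K \<subseteq> {1..n}"
      using nz assms(1,2)[of m] unfolding kz_chains_def by (auto split: if_splits)
    ultimately show "x \<in> (Pow {1..n} \<times> UNIV) \<times> {..<M}"
      using x by auto
  qed
  then have "finite {x. fk_of a b x \<noteq> 0}"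
    by (rule finite_subset) auto
  then show ?thesis
    using assms(1-3) by (intro fk_chainsI) auto
qed

lemma fk_plain_fk_d:
  assumes c: "c \<in> fk_chains n l" and l: "l \<ge> 1"
  shows "fk_plain (fk_d y n q l c) m = (\<lambda>K. kz_d (\<lambda>i. y i ^ q ^ m) n (fk_plain c m) K
      + (-1) ^ (l - 1) * (theta_shift (fk_wedge c) m K - fk_weight y q m K * fk_wedge c m K))"
proof
  fix K
  show "fk_plain (fk_d y n q l c) m K = kz_d (\<lambda>i. y i ^ q ^ m) n (fk_plain c m) K
      + (-1) ^ (l - 1) * (theta_shift (fk_wedge c) m K - fk_weight y q m K * fk_wedge c m K)"
  proof (cases "(K, False) \<in> fk_basis n (l - 1)")
    case True
    then have "K \<subseteq> {1..n}"
      by simp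
    then show ?thesis
      using True
      by (simp add: fk_plain_def fk_wedge_def fk_d_def kz_d_def theta_shift_def fk_weight_def
          right_diff_distrib mult.assoc)
  next
    case False
    have "kz_d (\<lambda>i. y i ^ q ^ m) n (fk_plain c m) K = 0"
      using False kz_d_support[OF fk_plain_mem_kz_chains[OF c]] l by fastforce
    moreover have "fk_wedge c m' K = 0" for m'
      using False fk_wedge_mem_kz_chains[OF c, of m'] unfolding kz_chains_def by auto
    ultimately show ?thesis
      using False by (simp add: fk_plain_def fk_d_def theta_shift_def)
  qed
qed

lemma fk_plain_fk_d_1_empty:
  assumes "c \<in> fk_chains n 1"
  shows "fk_plain (fk_d y n q 1 c) m {} = (\<Sum>i\<in>{1..n}. y i ^ q ^ m * fk_plain c m {i})
      + (theta_shift (fk_wedge c) m {} - fk_wedge c m {})"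
  using fun_cong[OF fk_plain_fk_d[OF assms order.refl, of y q m], of "{}"]
  by (simp add: kz_d_empty fk_weight_def)

lemma fk_wedge_fk_d:
  assumes c: "c \<in> fk_chains n l" and l: "l \<ge> 1"
  shows "fk_wedge (fk_d y n q l c) m = kz_d (\<lambda>i. y i ^ q ^ Suc m) n (fk_wedge c m)"
proof
  fix K
  have pow: "(y j ^ q) ^ q ^ m = y j ^ q ^ Suc m" for j
    by (simp add: power_mult[symmetric])
  show "fk_wedge (fk_d y n q l c) m K = kz_d (\<lambda>i. y i ^ q ^ Suc m) n (fk_wedge c m) K"
  proof (cases "(K, True) \<in> fk_basis n (l - 1)")
    case True
    then show ?thesis
      by (simp add: fk_wedge_def fk_d_def kz_d_def pow)
  next
    case False
    have "kz_d (\<lambda>i. y i ^ q ^ Suc m) n (fk_wedge c m) K = 0"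
      using False kz_d_support[OF fk_wedge_mem_kz_chains[OF c]] l by fastforce
    then show ?thesis
      using False by (simp add: fk_wedge_def fk_d_def)
  qed
qed

lemma fk_d_mem_fk_chains:
  assumes c: "c \<in> fk_chains n l" and l: "l \<ge> 1"
  shows "fk_d y n q l c \<in> fk_chains n (l - 1)"
proof -
  let ?d = "fk_d y n q l c"
  obtain M where M: "\<And>m. m \<ge> M \<Longrightarrow> fk_plain c m = (\<lambda>_. 0) \<and> fk_wedge c m = (\<lambda>_. 0)"
    using fk_chains_theta_bounded[OF c] by blast
  have "fk_of (fk_plain ?d) (fk_wedge ?d) \<in> fk_chains n (l - 1)"
  proof (rule fk_of_mem_fk_chains[where M = "Suc M"])
    show "fk_plain ?d m \<in> kz_chains n (l - 1)" for m
      unfolding kz_chains_def by (auto simp: fk_plain_def fk_d_def split: if_splits)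
    show "fk_wedge ?d m \<in> kz_chains n (l - 1 - 1)" for m
      unfolding kz_chains_def by (auto simp: fk_wedge_def fk_d_def split: if_splits)
    show "\<forall>m. fk_wedge ?d m = (\<lambda>_. 0)" if "l - 1 = 0"
      using that by (simp add: fk_wedge_def fk_d_def)
    show "fk_plain ?d m = (\<lambda>_. 0) \<and> fk_wedge ?d m = (\<lambda>_. 0)" if "m \<ge> Suc M" for m
      using M[of m] M[of "m - 1"] that
      by (simp add: fk_plain_fk_d[OF c l] fk_wedge_fk_d[OF c l] theta_shift_def)
  qed
  then show ?thesis
    unfolding fk_of_parts .
qed

lemma fk_weight_insert:
  assumes "finite K" "i \<notin> K"
  shows "fk_weight y q m (insert i K) = y i ^ ((q - 1) * q ^ m) * fk_weight y q m K"
  using assms unfolding fk_weight_def by (simp add: power_mult_distrib power_mult)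

lemma kz_d_fk_weight:
  assumes q: "q \<ge> 1"
  shows "kz_d (\<lambda>i. y i ^ q ^ m) n (\<lambda>K. fk_weight y q m K * f K)
       = (\<lambda>K. fk_weight y q m K * kz_d (\<lambda>i. y i ^ q ^ Suc m) n f K)"
proof
  fix K
  show "kz_d (\<lambda>i. y i ^ q ^ m) n (\<lambda>K. fk_weight y q m K * f K) K
      = fk_weight y q m K * kz_d (\<lambda>i. y i ^ q ^ Suc m) n f K"
  proof (cases "K \<subseteq> {1..n}")
    case False
    then show ?thesis
      unfolding kz_d_def by simp
  next
    case True
    then have finK: "finite K"
      using finite_subset by blast
    have exp: "q ^ m + (q - 1) * q ^ m = q ^ Suc m"
      using q by (simp add: algebra_simps)
    have "y i ^ q ^ m * fk_weight y q m (insert i K) = fk_weight y q m K * y i ^ q ^ Suc m"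
      if "i \<notin> K" for i
      unfolding fk_weight_insert[OF finK that] exp[symmetric] power_add by (simp only: ac_simps)
    then show ?thesis
      using True by (simp add: kz_d_def sum_distrib_left ac_simps)
  qed
qed

lemma fk_d_fk_d:
  assumes c: "c \<in> fk_chains n (Suc l)" and l: "l \<ge> 1" and q: "q \<ge> 1"
  shows "fk_d y n q l (fk_d y n q (Suc l) c) = (\<lambda>_. 0)"
proof (rule fk_chain_eqI)
  fix m
  let ?c = "fk_d y n q (Suc l) c"
  let ?D = "\<lambda>k. kz_d (\<lambda>i. y i ^ q ^ k) n"
  let ?s = "(-1::'a) ^ (l - 1)"
  have c': "?c \<in> fk_chains n l"
    using fk_d_mem_fk_chains[OF c] by simp
  have sign: "(-1::'a) ^ l = - ?s"
    using l by (cases l) auto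
  have wedge: "fk_wedge ?c k = ?D (Suc k) (fk_wedge c k)" for k
    using fk_wedge_fk_d[OF c] by simp
  show "fk_wedge (fk_d y n q l ?c) m = fk_wedge (\<lambda>_. 0) m"
    by (simp add: fk_wedge_fk_d[OF c' l] wedge kz_d_kz_d)
  have "?D m (fk_plain ?c m) = (\<lambda>K. - ?s * (?D m (theta_shift (fk_wedge c) m) K
      - fk_weight y q m K * ?D (Suc m) (fk_wedge c m) K))"
    using fk_plain_fk_d[OF c, of y q m]
    by (simp add: sign kz_d_add kz_d_diff kz_d_scale kz_d_kz_d kz_d_fk_weight[OF q])
  moreover have "theta_shift (fk_wedge ?c) m = ?D m (theta_shift (fk_wedge c) m)"
    by (cases m) (simp_all add: theta_shift_def wedge)
  ultimately show "fk_plain (fk_d y n q l ?c) m = fk_plain (\<lambda>_. 0) m"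
    by (simp add: fk_plain_fk_d[OF c' l] wedge)
qed

section \<open>Exactness in positive degrees\<close>

lemma koszul_regular_lift_sequence:
  assumes reg: "\<And>m. koszul_regular (Y m) n" and l: "l \<ge> 1"
    and f: "\<And>m. f m \<in> kz_chains n l" and cycle: "\<And>m. kz_d (Y m) n (f m) = (\<lambda>_. 0)"
    and M: "\<forall>m\<ge>M. f m = (\<lambda>_. 0)"
  obtains g where "\<And>m. g m \<in> kz_chains n (Suc l)" "\<And>m. f m = kz_d (Y m) n (g m)"
    "\<And>m. m \<ge> M \<Longrightarrow> g m = (\<lambda>_. 0)"
proof -
  have "\<forall>m. \<exists>g. g \<in> kz_chains n (Suc l) \<and> f m = kz_d (Y m) n g"
    using reg l f cycle unfolding koszul_regular_def by blast
  then obtain G where G: "\<And>m. G m \<in> kz_chains n (Suc l) \<and> f m = kz_d (Y m) n (G m)"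
    by metis
  show thesis
    by (rule that[of "\<lambda>m. if m \<ge> M then (\<lambda>_. 0) else G m"]) (use G M in auto)
qed

lemma tail_sum_solves_recurrence:
  fixes \<beta> G :: "nat \<Rightarrow> 'a::ab_group_add"
  assumes rec: "\<And>m. \<beta> m = \<beta> (Suc m) - G (Suc m)"
    and M: "\<And>m. m \<ge> M \<Longrightarrow> \<beta> m = 0 \<and> G m = 0"
  shows "\<beta> m = - (\<Sum>k\<in>{Suc m..<M}. G k)"
proof (induction "M - m" arbitrary: m)
  case 0
  then show ?case
    using M by simp
next
  case (Suc d)
  then have IH: "\<beta> (Suc m) = - (\<Sum>k\<in>{Suc (Suc m)..<M}. G k)" and "m < M"
    by simp_all
  then consider "Suc m < M" | "Suc m = M"
    by linarith
  then have "(\<Sum>k\<in>{Suc m..<M}. G k) = G (Suc m) + (\<Sum>k\<in>{Suc (Suc m)..<M}. G k)"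
    by cases (simp_all add: sum.atLeast_Suc_lessThan M)
  then show ?case
    using rec[of m] IH by simp
qed

lemma kz_d_tail_lift_empty:
  assumes q: "q \<ge> 1"
  shows "kz_d (\<lambda>i. y i ^ q ^ Suc m) n (\<lambda>K. if K \<subseteq> {1..n} \<and> card K = 1
        then - (\<Sum>k\<in>{Suc m..<M}. y (the_elem K) ^ (q ^ k - q ^ Suc m) * p k K) else 0) {}
    = - (\<Sum>k\<in>{Suc m..<M}. \<Sum>i\<in>{1..n}. y i ^ q ^ k * p k {i})"
proof -
  have pow: "y i ^ q ^ Suc m * y i ^ (q ^ k - q ^ Suc m) = y i ^ q ^ k" if "k \<in> {Suc m..<M}" for i k
    using power_increasing[of "Suc m" k q] that q by (simp flip: power_add power_Suc)
  have "kz_d (\<lambda>i. y i ^ q ^ Suc m) n (\<lambda>K. if K \<subseteq> {1..n} \<and> card K = 1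
        then - (\<Sum>k\<in>{Suc m..<M}. y (the_elem K) ^ (q ^ k - q ^ Suc m) * p k K) else 0) {}
    = (\<Sum>i\<in>{1..n}. y i ^ q ^ Suc m * - (\<Sum>k\<in>{Suc m..<M}. y i ^ (q ^ k - q ^ Suc m) * p k {i}))"
    unfolding kz_d_empty by (intro sum.cong refl) simp
  also have "\<dots> = (\<Sum>i\<in>{1..n}. - (\<Sum>k\<in>{Suc m..<M}. y i ^ q ^ k * p k {i}))"
    unfolding mult_minus_right sum_distrib_left
    by (intro sum.cong arg_cong[where f = uminus] refl) (metis pow mult.assoc)
  also have "\<dots> = - (\<Sum>k\<in>{Suc m..<M}. \<Sum>i\<in>{1..n}. y i ^ q ^ k * p k {i})"
    unfolding sum_negf by (rule arg_cong[where f = uminus], rule sum.swap)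
  finally show ?thesis .
qed

lemma fk_wedge_lift_deg1:
  assumes c: "c \<in> fk_chains n 1" and cycle: "fk_d y n q 1 c = (\<lambda>_. 0)" and q: "q \<ge> 1"
  obtains b M where "\<And>m. b m \<in> kz_chains n 1"
    "\<And>m. fk_wedge c m = kz_d (\<lambda>i. y i ^ q ^ Suc m) n (b m)" "\<And>m. m \<ge> M \<Longrightarrow> b m = (\<lambda>_. 0)"
proof -
  obtain M where M: "\<And>m. m \<ge> M \<Longrightarrow> fk_plain c m = (\<lambda>_. 0) \<and> fk_wedge c m = (\<lambda>_. 0)"
    using fk_chains_theta_bounded[OF c] by blast
  define G where "G k = (\<Sum>i\<in>{1..n}. y i ^ q ^ k * fk_plain c k {i})" for k
  have "G (Suc m) + (fk_wedge c m {} - fk_wedge c (Suc m) {}) = 0" for m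
    using fk_plain_fk_d_1_empty[OF c, of y q "Suc m"] cycle by (simp add: G_def theta_shift_def)
  then have tail: "fk_wedge c m {} = - (\<Sum>k\<in>{Suc m..<M}. G k)" for m
    by (intro tail_sum_solves_recurrence) (auto simp: M G_def algebra_simps)
  define b where "b m = (\<lambda>K. if K \<subseteq> {1..n} \<and> card K = 1
      then - (\<Sum>k\<in>{Suc m..<M}. y (the_elem K) ^ (q ^ k - q ^ Suc m) * fk_plain c k K) else 0)"
    for m
  have b: "b m \<in> kz_chains n 1" "m \<ge> M \<Longrightarrow> b m = (\<lambda>_. 0)" for m
    by (auto simp: kz_chains_def b_def fun_eq_iff)
  have "fk_wedge c m K = kz_d (\<lambda>i. y i ^ q ^ Suc m) n (b m) K" for m K
  proof (cases "K = {}")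
    case True
    then show ?thesis
      using tail kz_d_tail_lift_empty[OF q, where y = y and n = n and M = M and p = "fk_plain c"]
      by (simp add: G_def b_def)
  next
    case False
    then show ?thesis
      using b(1) fk_wedge_mem_kz_chains[OF c, of m]
      by (simp add: kz_d_kz_chains_1_nonempty kz_chains_0_nonempty)
  qed
  then show thesis
    using that b by blast
qed

lemma fk_wedge_lift:
  assumes c: "c \<in> fk_chains n l" and l: "l \<ge> 1" and cycle: "fk_d y n q l c = (\<lambda>_. 0)"
    and reg: "koszul_regular y n" and q: "q \<ge> 1"
  obtains b M where "\<And>m. b m \<in> kz_chains n l"
    "\<And>m. fk_wedge c m = kz_d (\<lambda>i. y i ^ q ^ Suc m) n (b m)" "\<And>m. m \<ge> M \<Longrightarrow> b m = (\<lambda>_. 0)"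
proof (cases "l = 1")
  case True
  obtain b M where b: "\<And>m. b m \<in> kz_chains n 1"
    "\<And>m. fk_wedge c m = kz_d (\<lambda>i. y i ^ q ^ Suc m) n (b m)" "\<And>m. m \<ge> M \<Longrightarrow> b m = (\<lambda>_. 0)"
    by (rule fk_wedge_lift_deg1[OF c[unfolded True] cycle[unfolded True] q]) (rule that)
  show thesis
    by (rule that[OF b[folded True]])
next
  case False
  obtain M where M: "\<And>m. m \<ge> M \<Longrightarrow> fk_plain c m = (\<lambda>_. 0) \<and> fk_wedge c m = (\<lambda>_. 0)"
    using fk_chains_theta_bounded[OF c] by blast
  then have wedge_bound: "\<forall>m\<ge>M. fk_wedge c m = (\<lambda>_. 0)"
    by simp
  have wedge_cycle: "kz_d (\<lambda>i. y i ^ q ^ Suc m) n (fk_wedge c m) = (\<lambda>_. 0)" for m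
    using fk_wedge_fk_d[OF c l, of y q m] cycle by simp
  have reg_pow: "koszul_regular (\<lambda>i. y i ^ q ^ Suc m) n" for m
    using koszul_regular_power[OF reg] q by simp
  have l': "l - 1 \<ge> 1" "Suc (l - 1) = l"
    using False l by simp_all
  obtain b where "\<And>m. b m \<in> kz_chains n (Suc (l - 1))"
    "\<And>m. fk_wedge c m = kz_d (\<lambda>i. y i ^ q ^ Suc m) n (b m)" "\<And>m. m \<ge> M \<Longrightarrow> b m = (\<lambda>_. 0)"
    by (rule koszul_regular_lift_sequence[where f = "fk_wedge c" and M = M,
          OF reg_pow l'(1) fk_wedge_mem_kz_chains[OF c] wedge_cycle wedge_bound]) (rule that)
  then show thesis
    using that[of b M] l'(2) by simp
qed

lemma fk_cycle_is_boundary: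
  assumes c: "c \<in> fk_chains n l" and l: "l \<ge> 1" and cycle: "fk_d y n q l c = (\<lambda>_. 0)"
    and reg: "koszul_regular y n" and q: "q \<ge> 1"
  shows "\<exists>c'\<in>fk_chains n (Suc l). c = fk_d y n q (Suc l) c'"
proof -
  let ?D = "\<lambda>k. kz_d (\<lambda>i. y i ^ q ^ k) n"
  let ?s = "(-1::'a) ^ (l - 1)"
  obtain b M\<^sub>b where b: "\<And>m. b m \<in> kz_chains n l" and b_lift: "\<And>m. fk_wedge c m = ?D (Suc m) (b m)"
    and b_bound: "\<And>m. m \<ge> M\<^sub>b \<Longrightarrow> b m = (\<lambda>_. 0)"
    using fk_wedge_lift[OF c l cycle reg q] by blast
  obtain M\<^sub>c where c_bound: "\<And>m. m \<ge> M\<^sub>c \<Longrightarrow> fk_plain c m = (\<lambda>_. 0) \<and> fk_wedge c m = (\<lambda>_. 0)"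
    using fk_chains_theta_bounded[OF c] by blast
  define a where "a m = (\<lambda>K. fk_plain c m K + ?s * (theta_shift b m K - fk_weight y q m K * b m K))"
    for m
  have "theta_shift (fk_wedge c) m = ?D m (theta_shift b m)" for m
    by (cases m) (simp_all add: theta_shift_def b_lift)
  then have "?D m (a m) = fk_plain (fk_d y n q l c) m" for m
    by (simp add: a_def fk_plain_fk_d[OF c l] kz_d_add kz_d_diff kz_d_scale kz_d_fk_weight[OF q]
        b_lift)
  then have a_cycle: "?D m (a m) = (\<lambda>_. 0)" for m
    using cycle by simp
  have a: "a m \<in> kz_chains n l" for m
    unfolding a_def using fk_plain_mem_kz_chains[OF c] theta_shift_mem_kz_chains[OF b] b
    by (intro kz_chains_add kz_chains_mult kz_chains_diff)
  have reg_pow: "koszul_regular (\<lambda>i. y i ^ q ^ m) n" for m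
    using koszul_regular_power[OF reg] q by simp
  have a_bound: "\<forall>m\<ge>Suc (M\<^sub>b + M\<^sub>c). a m = (\<lambda>_. 0)"
    using b_bound c_bound by (simp add: a_def theta_shift_def)
  obtain a' where a': "\<And>m. a' m \<in> kz_chains n (Suc l)" and a'_lift: "\<And>m. a m = ?D m (a' m)"
    and a'_bound: "\<And>m. m \<ge> Suc (M\<^sub>b + M\<^sub>c) \<Longrightarrow> a' m = (\<lambda>_. 0)"
    by (rule koszul_regular_lift_sequence[where f = a and M = "Suc (M\<^sub>b + M\<^sub>c)",
          OF reg_pow l a a_cycle a_bound]) (rule that)
  have c': "fk_of a' b \<in> fk_chains n (Suc l)"
    using a' b a'_bound b_bound by (intro fk_of_mem_fk_chains[where M = "Suc (M\<^sub>b + M\<^sub>c)"]) auto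
  have "c = fk_d y n q (Suc l) (fk_of a' b)"
  proof (rule fk_chain_eqI)
    fix m
    have sign: "(-1::'a) ^ l = - ?s"
      using l by (cases l) auto
    show "fk_plain c m = fk_plain (fk_d y n q (Suc l) (fk_of a' b)) m"
      using a'_lift[of m] by (simp add: fk_plain_fk_d[OF c'] sign a_def fun_eq_iff eq_diff_eq)
    show "fk_wedge c m = fk_wedge (fk_d y n q (Suc l) (fk_of a' b)) m"
      by (simp add: fk_wedge_fk_d[OF c'] b_lift)
  qed
  then show ?thesis
    using c' by blast
qed

section \<open>Degree zero\<close>

lemma mem_gen_ideal_image:
  fixes y :: "'b \<Rightarrow> 'a::comm_ring_1"
  assumes "finite S"
  shows "a \<in> gen_ideal (y ` S) \<longleftrightarrow> (\<exists>t. a = (\<Sum>i\<in>S. t i * y i))"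
proof
  assume "a \<in> gen_ideal (y ` S)"
  then obtain F c where F: "F \<subseteq> y ` S" and a: "a = (\<Sum>x\<in>F. c x * x)"
    unfolding gen_ideal_def by blast
  then obtain S' where S': "S' \<subseteq> S" "inj_on y S'" "F = y ` S'"
    by (meson subset_image_inj)
  define t where "t i = (if i \<in> S' then c (y i) else 0)" for i
  have "(\<Sum>i\<in>S. t i * y i) = (\<Sum>i\<in>S'. c (y i) * y i)"
    using S'(1) assms by (intro sum.mono_neutral_cong_right) (auto simp: t_def)
  also have "\<dots> = a"
    unfolding a S'(3) by (rule sum.reindex[OF S'(2), symmetric, unfolded comp_def])
  finally show "\<exists>t. a = (\<Sum>i\<in>S. t i * y i)"
    by metis
next
  assume "\<exists>t. a = (\<Sum>i\<in>S. t i * y i)"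
  then obtain t where a: "a = (\<Sum>i\<in>S. t i * y i)"
    by blast
  define c where "c x = (\<Sum>i\<in>{i\<in>S. y i = x}. t i)" for x
  have "a = (\<Sum>x\<in>y ` S. \<Sum>i\<in>{i\<in>S. y i = x}. t i * y i)"
    unfolding a using assms by (rule sum.image_gen)
  also have "\<dots> = (\<Sum>x\<in>y ` S. c x * x)"
    unfolding c_def sum_distrib_right by (rule sum.cong) auto
  finally show "a \<in> gen_ideal (y ` S)"
    unfolding gen_ideal_def using assms by blast
qed

lemma fk_chains_0_support:
  assumes "c \<in> fk_chains n 0" "c ((K, u), m) \<noteq> 0"
  shows "K = {} \<and> \<not> u"
proof -
  have "(K, u) \<in> fk_basis n 0"
    using assms unfolding fk_chains_def by blast
  then show ?thesis
    unfolding fk_basis_def using finite_subset[of K "{1..n}"] by auto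
qed

lemma fk_aug_eq_sum:
  assumes c: "c \<in> fk_chains n 0" and M: "\<And>m. m \<ge> M \<Longrightarrow> fk_plain c m = (\<lambda>_. 0)"
  shows "fk_aug c = (\<Sum>m<M. fk_plain c m {})"
proof -
  let ?T = "(\<lambda>m. (({}, False), m)) ` {..<M}"
  have "{x. c x \<noteq> 0} \<subseteq> ?T"
  proof
    fix x assume x: "x \<in> {x. c x \<noteq> 0}"
    obtain K u m where x_eq: "x = ((K, u), m)"
      by (metis prod.collapse)
    then have "K = {}" "\<not> u"
      using fk_chains_0_support[OF c] x by auto
    moreover have "m < M"
    proof (rule ccontr)
      assume "\<not> m < M"
      then have "c ((K, False), m) = 0"
        using M[of m] by (simp add: fk_plain_def fun_eq_iff)
      then show False
        using x x_eq calculation by simp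
    qed
    ultimately show "x \<in> ?T"
      using x_eq by auto
  qed
  then have "fk_aug c = sum c ?T"
    unfolding fk_aug_def by (intro sum.mono_neutral_left) auto
  also have "\<dots> = (\<Sum>m<M. fk_plain c m {})"
    by (subst sum.reindex) (auto simp: inj_on_def fk_plain_def)
  finally show ?thesis .
qed

lemma sum_theta_shift_telescope:
  fixes b :: "nat \<Rightarrow> nat set \<Rightarrow> 'a::ab_group_add"
  shows "(\<Sum>m<Suc N. theta_shift b m K - b m K) = - b N K"
  by (induction N) (auto simp: theta_shift_def)

lemma fk_aug_fk_d_mem_gen_ideal:
  assumes c: "c \<in> fk_chains n 1" and q: "q \<ge> 1"
  shows "fk_aug (fk_d y n q 1 c) \<in> gen_ideal (y ` {1..n})"
proof -
  let ?d = "fk_d y n q 1 c"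
  obtain M where M: "\<And>m. m \<ge> M \<Longrightarrow> fk_plain c m = (\<lambda>_. 0) \<and> fk_wedge c m = (\<lambda>_. 0)"
    using fk_chains_theta_bounded[OF c] by blast
  have "fk_plain ?d m = (\<lambda>_. 0)" if "m \<ge> Suc M" for m
    using M[of m] M[of "m - 1"] that fk_plain_fk_d[OF c order.refl, of y q m]
    by (simp add: theta_shift_def)
  then have "fk_aug ?d = (\<Sum>m<Suc M. fk_plain ?d m {})"
    using fk_d_mem_fk_chains[OF c, of y q] by (intro fk_aug_eq_sum) auto
  also have "\<dots> = (\<Sum>m<Suc M. \<Sum>i\<in>{1..n}. y i ^ q ^ m * fk_plain c m {i})
      + (\<Sum>m<Suc M. theta_shift (fk_wedge c) m {} - fk_wedge c m {})"
    unfolding fk_plain_fk_d_1_empty[OF c] sum.distrib ..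
  also have "(\<Sum>m<Suc M. theta_shift (fk_wedge c) m {} - fk_wedge c m {}) = 0"
    unfolding sum_theta_shift_telescope using M[of M] by simp
  also have "(\<Sum>m<Suc M. \<Sum>i\<in>{1..n}. y i ^ q ^ m * fk_plain c m {i})
      = (\<Sum>i\<in>{1..n}. (\<Sum>m<Suc M. y i ^ (q ^ m - 1) * fk_plain c m {i}) * y i)"
  proof -
    have "y i ^ q ^ m = y i ^ (q ^ m - 1) * y i" for i m
      using q by (simp flip: power_Suc2)
    then have "(\<Sum>m<Suc M. \<Sum>i\<in>{1..n}. y i ^ q ^ m * fk_plain c m {i})
        = (\<Sum>m<Suc M. \<Sum>i\<in>{1..n}. y i ^ (q ^ m - 1) * fk_plain c m {i} * y i)"
      by (intro sum.cong refl) (simp only: ac_simps)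
    also have "\<dots> = (\<Sum>i\<in>{1..n}. \<Sum>m<Suc M. y i ^ (q ^ m - 1) * fk_plain c m {i} * y i)"
      by (rule sum.swap)
    finally show ?thesis
      unfolding sum_distrib_right .
  qed
  finally show ?thesis
    unfolding mem_gen_ideal_image[OF finite_atLeastAtMost] add_0_right
    by (rule exI[where x = "\<lambda>i. \<Sum>m<Suc M. y i ^ (q ^ m - 1) * fk_plain c m {i}"])
qed

lemma fk_chains_0_eqI:
  assumes c: "c \<in> fk_chains n 0" and c': "c' \<in> fk_chains n 0"
    and empty: "\<And>m. fk_plain c m {} = fk_plain c' m {}"
  shows "c = c'"
proof (rule fk_chain_eqI)
  fix m
  show "fk_wedge c m = fk_wedge c' m"
    using fk_wedge_fk_chains_0[OF c] fk_wedge_fk_chains_0[OF c'] by simp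
  show "fk_plain c m = fk_plain c' m"
  proof
    fix K
    show "fk_plain c m K = fk_plain c' m K"
      using empty[of m] kz_chains_0_nonempty[OF fk_plain_mem_kz_chains[OF c]]
        kz_chains_0_nonempty[OF fk_plain_mem_kz_chains[OF c']] by (cases "K = {}") auto
  qed
qed

lemma fk_chain_0_is_boundary:
  assumes c: "c \<in> fk_chains n 0" and ideal: "fk_aug c \<in> gen_ideal (y ` {1..n})"
  shows "\<exists>c'\<in>fk_chains n 1. c = fk_d y n q 1 c'"
proof -
  obtain t where t: "fk_aug c = (\<Sum>i\<in>{1..n}. t i * y i)"
    using ideal mem_gen_ideal_image[of "{1..n}" "fk_aug c" y] by auto
  obtain M where M: "\<And>m. m \<ge> M \<Longrightarrow> fk_plain c m = (\<lambda>_. 0) \<and> fk_wedge c m = (\<lambda>_. 0)"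
    using fk_chains_theta_bounded[OF c] by blast
  define tail where "tail m = (\<Sum>k\<in>{m..<M}. fk_plain c k {})" for m
  have tail_diff: "tail m - tail (Suc m) = fk_plain c m {}" for m
    using M[of m] by (cases "m < M") (simp_all add: tail_def sum.atLeast_Suc_lessThan)
  have aug: "fk_aug c = tail 0"
    using fk_aug_eq_sum[OF c] M by (simp add: tail_def atLeast0LessThan)
  define a where
    "a (m::nat) (K::nat set) = (if m = 0 \<and> K \<subseteq> {1..n} \<and> card K = 1 then t (the_elem K) else 0)"
    for m K
  define b where "b (m::nat) (K::nat set) = (if K = {} then tail (Suc m) else 0)" for m K
  have a: "a m \<in> kz_chains n 1" and b: "b m \<in> kz_chains n 0" for m
    by (auto simp: kz_chains_def a_def b_def)
  have c': "fk_of a b \<in> fk_chains n 1"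
  proof (rule fk_of_mem_fk_chains[where M = "Suc M"])
    show "a m = (\<lambda>_. 0) \<and> b m = (\<lambda>_. 0)" if "m \<ge> Suc M" for m
      using that by (auto simp: a_def b_def tail_def fun_eq_iff)
  qed (use a b in simp_all)
  have "c = fk_d y n q 1 (fk_of a b)"
  proof (rule fk_chains_0_eqI[OF c])
    show "fk_d y n q 1 (fk_of a b) \<in> fk_chains n 0"
      using fk_d_mem_fk_chains[OF c' order.refl] by simp
    fix m
    have "(\<Sum>i\<in>{1..n}. y i ^ q ^ m * a m {i}) = (if m = 0 then fk_aug c else 0)"
      by (simp add: a_def t mult.commute)
    then show "fk_plain c m {} = fk_plain (fk_d y n q 1 (fk_of a b)) m {}"
      using tail_diff[of m] aug fk_plain_fk_d_1_empty[OF c', of y q m]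
      by (cases m) (simp_all add: theta_shift_def b_def)
  qed
  then show ?thesis
    using c' by blast
qed

lemma fk_aug_surj: "\<exists>c\<in>fk_chains n 0. fk_aug c = a"
proof
  let ?c = "\<lambda>x. if x = (({}, False), 0) then a else 0"
  have supp: "{x. ?c x \<noteq> 0} = (if a = 0 then {} else {(({}, False), 0)})"
    by auto
  show "?c \<in> fk_chains n 0"
    unfolding fk_chains_def using supp by auto
  show "fk_aug ?c = a"
    unfolding fk_aug_def supp by simp
qed

section \<open>Top degree\<close>

lemma backward_recurrence_eventually_zero:
  fixes \<delta> :: "nat \<Rightarrow> 'a::mult_zero"
  assumes rec: "\<And>m. \<delta> m = w m * \<delta> (Suc m)" and M: "\<And>m. m \<ge> M \<Longrightarrow> \<delta> m = 0"
  shows "\<delta> m = 0"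
proof (induction "M - m" arbitrary: m)
  case 0
  then show ?case
    using M by simp
next
  case (Suc d)
  then have "\<delta> (Suc m) = 0"
    by simp
  then show ?case
    using rec[of m] by simp
qed

lemma kz_chains_above_dim:
  assumes "f \<in> kz_chains n l" "l > n"
  shows "f = (\<lambda>_. 0)"
proof
  fix K
  have "card K \<le> n" if "K \<subseteq> {1..n}"
    using card_mono[OF _ that] by simp
  then show "f K = 0"
    using assms unfolding kz_chains_def by fastforce
qed

lemma kz_chains_top_dim:
  assumes "f \<in> kz_chains n n" "K \<noteq> {1..n}"
  shows "f K = 0"
  using assms card_subset_eq[of "{1..n}" K] unfolding kz_chains_def by fastforce

lemma fk_plain_fk_d_top:
  assumes c: "c \<in> fk_chains n (Suc n)"
  shows "fk_plain (fk_d y n q (Suc n) c) m {1..n}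
       = (-1) ^ n * (theta_shift (fk_wedge c) m {1..n} - fk_weight y q m {1..n} * fk_wedge c m {1..n})"
  using fun_cong[OF fk_plain_fk_d[OF c, of y q m], of "{1..n}"]
    kz_chains_above_dim[OF fk_plain_mem_kz_chains[OF c]] by simp

lemma fk_top_chain_eqI:
  assumes c\<^sub>1: "c\<^sub>1 \<in> fk_chains n (Suc n)" and c\<^sub>2: "c\<^sub>2 \<in> fk_chains n (Suc n)"
    and top: "\<And>m. fk_wedge c\<^sub>1 m {1..n} = fk_wedge c\<^sub>2 m {1..n}"
  shows "c\<^sub>1 = c\<^sub>2"
proof (rule fk_chain_eqI)
  fix m
  show "fk_plain c\<^sub>1 m = fk_plain c\<^sub>2 m"
    using kz_chains_above_dim[OF fk_plain_mem_kz_chains[OF c\<^sub>1]]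
      kz_chains_above_dim[OF fk_plain_mem_kz_chains[OF c\<^sub>2]] by simp
  show "fk_wedge c\<^sub>1 m = fk_wedge c\<^sub>2 m"
  proof
    fix K
    show "fk_wedge c\<^sub>1 m K = fk_wedge c\<^sub>2 m K"
      using top[of m] kz_chains_top_dim[OF fk_wedge_mem_kz_chains[OF c\<^sub>1, of m, simplified]]
        kz_chains_top_dim[OF fk_wedge_mem_kz_chains[OF c\<^sub>2, of m, simplified]]
      by (cases "K = {1..n}") auto
  qed
qed

lemma fk_d_top_inj:
  "inj_on (fk_d y n q (Suc n)) (fk_chains n (Suc n))"
proof (rule inj_onI)
  fix c\<^sub>1 c\<^sub>2
  assume c\<^sub>1: "c\<^sub>1 \<in> fk_chains n (Suc n)" and c\<^sub>2: "c\<^sub>2 \<in> fk_chains n (Suc n)"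
    and eq: "fk_d y n q (Suc n) c\<^sub>1 = fk_d y n q (Suc n) c\<^sub>2"
  let ?N = "{1..n}"
  define \<delta> where "\<delta> m = fk_wedge c\<^sub>1 m ?N - fk_wedge c\<^sub>2 m ?N" for m
  have "(-1) ^ n * (theta_shift (fk_wedge c\<^sub>1) m ?N - fk_weight y q m ?N * fk_wedge c\<^sub>1 m ?N)
      = (-1) ^ n * (theta_shift (fk_wedge c\<^sub>2) m ?N - fk_weight y q m ?N * fk_wedge c\<^sub>2 m ?N)" for m
    using fk_plain_fk_d_top[OF c\<^sub>1, of y q m] fk_plain_fk_d_top[OF c\<^sub>2, of y q m] eq by simp
  then have "theta_shift (fk_wedge c\<^sub>1) m ?N - fk_weight y q m ?N * fk_wedge c\<^sub>1 m ?N
      = theta_shift (fk_wedge c\<^sub>2) m ?N - fk_weight y q m ?N * fk_wedge c\<^sub>2 m ?N" for m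
    by (metis (no_types, lifting) mult.assoc mult_1 neg_one_power_square)
  from this[of "Suc m" for m] have rec: "\<delta> m = fk_weight y q (Suc m) ?N * \<delta> (Suc m)" for m
    by (simp add: \<delta>_def theta_shift_def algebra_simps)
  obtain M\<^sub>1 where M\<^sub>1: "\<And>m. m \<ge> M\<^sub>1 \<Longrightarrow> fk_plain c\<^sub>1 m = (\<lambda>_. 0) \<and> fk_wedge c\<^sub>1 m = (\<lambda>_. 0)"
    using fk_chains_theta_bounded[OF c\<^sub>1] by blast
  obtain M\<^sub>2 where M\<^sub>2: "\<And>m. m \<ge> M\<^sub>2 \<Longrightarrow> fk_plain c\<^sub>2 m = (\<lambda>_. 0) \<and> fk_wedge c\<^sub>2 m = (\<lambda>_. 0)"
    using fk_chains_theta_bounded[OF c\<^sub>2] by blast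
  have \<delta>: "\<delta> m = 0" for m
    by (rule backward_recurrence_eventually_zero[where M = "M\<^sub>1 + M\<^sub>2" and \<delta> = \<delta>
        and w = "\<lambda>m. fk_weight y q (Suc m) ?N", OF rec])
      (simp add: \<delta>_def M\<^sub>1 M\<^sub>2)
  show "c\<^sub>1 = c\<^sub>2"
    using fk_top_chain_eqI[OF c\<^sub>1 c\<^sub>2] \<delta> by (simp add: \<delta>_def)
qed

lemma fk_aug_preimage_ideal_eq_boundaries:
  assumes "q \<ge> 1"
  shows "{c \<in> fk_chains n 0. fk_aug c \<in> gen_ideal (y ` {1..n})} = fk_d y n q 1 ` fk_chains n 1"
  using fk_chain_0_is_boundary fk_aug_fk_d_mem_gen_ideal[OF _ assms] fk_d_mem_fk_chains[of _ n 1]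
  by fastforce

lemma fk_cycles_eq_boundaries:
  assumes "koszul_regular y n" "q \<ge> 1" "l \<ge> 1"
  shows "{c \<in> fk_chains n l. fk_d y n q l c = (\<lambda>_. 0)} = fk_d y n q (Suc l) ` fk_chains n (Suc l)"
  using fk_cycle_is_boundary[OF _ assms(3) _ assms(1,2)] fk_d_fk_d[OF _ assms(3,2)]
    fk_d_mem_fk_chains[of _ n "Suc l"] by fastforce

theorem corollary3:
  fixes y :: "nat \<Rightarrow> 'a::comm_ring_1" and p e n :: nat
  assumes "prime p" and "CHAR('a) = p" and "regular_ring TYPE('a)"
    and "e \<ge> 1" and "koszul_regular y n"
  shows "(\<forall>a::'a. \<exists>c\<in>fk_chains n 0. fk_aug c = a)
    \<and> {c \<in> fk_chains n 0. fk_aug c \<in> gen_ideal (y ` {1..n})} = fk_d y n (p ^ e) 1 ` fk_chains n 1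
    \<and> (\<forall>l\<in>{1..n}. {c \<in> fk_chains n l. fk_d y n (p ^ e) l c = (\<lambda>_. 0)}
                    = fk_d y n (p ^ e) (Suc l) ` fk_chains n (Suc l))
    \<and> inj_on (fk_d y n (p ^ e) (Suc n)) (fk_chains n (Suc n))"
proof -
  have q: "p ^ e \<ge> 1"
    using prime_gt_0_nat[OF \<open>prime p\<close>] by simp
  show ?thesis
    by (intro conjI allI ballI fk_aug_surj fk_aug_preimage_ideal_eq_boundaries[OF q] fk_d_top_inj
        fk_cycles_eq_boundaries[OF \<open>koszul_regular y n\<close> q]) simp
qed

end
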